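(* Let $(d_i)_{i\ge1}$ be an infinite alternate Lyndon word over the alphabet $\mathcal{A}=\{0,1,\dots,d_1\}$, let $M=M((d_i)_{i\ge1})$ be the associated alternate Lyndon system, and let $H_n$ be the number of words of length $n$ in the language $L_M$ of $M$. Then $H_0=1$ and for all $n\ge1$, $$H_n=\sum_{k=1}^{n}(-1)^k(d_{k-1}-d_k)H_{n-k}+1,$$ with the convention $d_0=0$.
   Context: Alphabets are finite sets $\{0,1,\dots,d\}$ of nonnegative integers with the usual order. Alternate order: for two words $x=x_1x_2\cdots$, $y=y_1y_2\cdots$ (both infinite, or both finite of the same length), $x\prec y$ iff there is $k$ with $x_i=y_i$ for all $i<k$ and $(-1)^k(x_k-y_k)<0$; $x\preceq y$ iff $x=y$ or $x\prec y$. Finite words of different lengths are compared after padding the shorter one on the right with zeros. An alternate Lyndon word is an infinite word $(d_i)_{i\ge1}$ such that $d_1d_2d_3\cdots\preceq d_nd_{n+1}\cdots$ for all $n\ge1$. The alternate Lyndon system $M((d_i)_{i\ge1})$ is the set of infinite words $x_1x_2\cdots$ over the alphabet with $d_1d_2\cdots\preceq x_kx_{k+1}\cdots$ for all $k\ge1$. Its language $L_M$ is the set of finite factors (finite blocks of consecutive letters) of elements of $M$; $H_n$ denotes the number of words of length $n$ in $L_M$, with $H_0=1$. *)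

theory Defs
  imports Main
begin

(* Infinite words are functions nat => nat, indexed from 1 (the value at 0 is ignored). *)

definition alt_less :: "(nat \<Rightarrow> nat) \<Rightarrow> (nat \<Rightarrow> nat) \<Rightarrow> bool" where
  "alt_less x y \<longleftrightarrow> (\<exists>k\<ge>1. (\<forall>i. 1 \<le> i \<and> i < k \<longrightarrow> x i = y i) \<and>
      (-1::int) ^ k * (int (x k) - int (y k)) < 0)"

definition alt_le :: "(nat \<Rightarrow> nat) \<Rightarrow> (nat \<Rightarrow> nat) \<Rightarrow> bool" where
  "alt_le x y \<longleftrightarrow> (\<forall>i\<ge>1. x i = y i) \<or> alt_less x y"

definition suffix_from :: "(nat \<Rightarrow> nat) \<Rightarrow> nat \<Rightarrow> nat \<Rightarrow> nat" where
  "suffix_from x n = (\<lambda>i. x (n + i - 1))"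

definition alt_lyndon :: "(nat \<Rightarrow> nat) \<Rightarrow> bool" where
  "alt_lyndon d \<longleftrightarrow> (\<forall>n\<ge>1. alt_le d (suffix_from d n))"

definition alt_lyndon_system :: "nat \<Rightarrow> (nat \<Rightarrow> nat) \<Rightarrow> (nat \<Rightarrow> nat) set" where
  "alt_lyndon_system a d = {x. (\<forall>i\<ge>1. x i \<le> a) \<and> (\<forall>k\<ge>1. alt_le d (suffix_from x k))}"

definition language :: "(nat \<Rightarrow> nat) set \<Rightarrow> nat list set" where
  "language M = {w. \<exists>x\<in>M. \<exists>k\<ge>1. w = map x [k..<k + length w]}"

definition H :: "(nat \<Rightarrow> nat) set \<Rightarrow> nat \<Rightarrow> nat" where
  "H M n = card {w \<in> language M. length w = n}"

end

theory Submission
  imports Defs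
begin

text \<open>
  A finite word w is a factor of M iff it is admissible: every suffix of w dominates, in the
  alternate order, the prefix of d of the same length. Indeed, extending w by d right after
  its shortest prefix whose remainder is a prefix of d yields an element of M.

  Let H_m (\<open>card (adm_words d m)\<close>) count the admissible words of length m and Q_k(m)
  (\<open>below_count d k m\<close>) those below the factor d_k \<dots> d_(k+m-1) of d. A word above an
  admissible word is admissible as soon as its tail is, so the admissible words strictly above
  d_k \<dots> d_(k+m) are the words b v with b < d_k, and d_k v with v strictly below
  d_(k+1) \<dots> d_(k+m). Hence
  Q_k(m+1) + d_k H_m + Q_(k+1)(m) = H_(m+1) + 1. Subtracting these identities for k and k+1,
  the differences Q_(k+1)(m) - Q_k(m) become alternating sums, and since Q_1(m) = 1 the
  identity for k = 1 is the claimed recursion.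
\<close>

text \<open>After a common first letter the tails are compared in reverse, as the sign (-1)^k flips.\<close>

function (sequential) alt_le_list :: "nat list \<Rightarrow> nat list \<Rightarrow> bool" where
  "alt_le_list [] [] \<longleftrightarrow> True"
| "alt_le_list (a # x) (b # y) \<longleftrightarrow> b < a \<and> length x = length y \<or> a = b \<and> alt_le_list y x"
| "alt_le_list _ _ \<longleftrightarrow> False"
  by pat_completeness auto
termination by (relation "measure (\<lambda>(x, y). length x + length y)") auto

lemma alt_le_list_length: "alt_le_list x y \<Longrightarrow> length x = length y"
  by (induction x y rule: alt_le_list.induct) auto

lemma alt_le_list_refl: "alt_le_list x x"
  by (induction x) auto

lemma alt_le_list_antisym: "alt_le_list x y \<Longrightarrow> alt_le_list y x \<Longrightarrow> x = y"
  by (induction x y rule: alt_le_list.induct) auto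

lemma alt_le_list_linear: "length x = length y \<Longrightarrow> alt_le_list x y \<or> alt_le_list y x"
  by (induction x y rule: alt_le_list.induct) auto

lemma alt_le_list_trans: "alt_le_list x y \<Longrightarrow> alt_le_list y z \<Longrightarrow> alt_le_list x z"
proof (induction x arbitrary: y z rule: length_induct)
  case (1 x)
  show ?case
  proof (cases x)
    case Nil
    then show ?thesis using "1.prems" by (cases y) auto
  next
    case (Cons a x')
    with "1.prems" obtain b y' c z' where yz: "y = b # y'" "z = c # z'"
      by (cases y; cases z) auto
    have len: "length x' = length y'" "length y' = length z'"
      using "1.prems" Cons yz alt_le_list_length by fastforce+
    have IH: "alt_le_list z' y' \<Longrightarrow> alt_le_list y' x' \<Longrightarrow> alt_le_list z' x'"
      using "1.IH" Cons len by (metis length_Cons lessI)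
    show ?thesis using "1.prems" IH len unfolding Cons yz by auto
  qed
qed

definition factor :: "(nat \<Rightarrow> nat) \<Rightarrow> nat \<Rightarrow> nat \<Rightarrow> nat list" where
  "factor x k m = map x [k..<k + m]"

lemma length_factor [simp]: "length (factor x k m) = m"
  by (simp add: factor_def)

lemma factor_0 [simp]: "factor x k 0 = []"
  by (simp add: factor_def)

lemma nth_factor [simp]: "i < m \<Longrightarrow> factor x k m ! i = x (k + i)"
  by (simp add: factor_def)

lemma factor_Suc: "factor x k (Suc m) = x k # factor x (Suc k) m"
  by (simp add: factor_def upt_conv_Cons del: upt_Suc)

lemma factor_shift: "factor (\<lambda>i. x (Suc i)) k m = factor x (Suc k) m"
  by (induction m arbitrary: k) (simp_all add: factor_Suc)

lemma factor_suffix_from: "factor (suffix_from x p) 1 m = factor x p m"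
  by (rule nth_equalityI) (auto simp: factor_def suffix_from_def nth_upt simp del: upt_Suc)

lemma factor_eq_iff: "factor x k m = factor y k m \<longleftrightarrow> (\<forall>i\<in>{k..<k + m}. x i = y i)"
  by (simp add: factor_def map_eq_conv)

lemma in_language_iff: "w \<in> language M \<longleftrightarrow> (\<exists>x\<in>M. \<exists>k\<ge>1. w = factor x k (length w))"
  by (simp add: language_def factor_def)

definition alt_less_at :: "(nat \<Rightarrow> nat) \<Rightarrow> (nat \<Rightarrow> nat) \<Rightarrow> nat \<Rightarrow> bool" where
  "alt_less_at x y k \<longleftrightarrow> (\<forall>i\<in>{1..<k}. x i = y i) \<and> (-1::int) ^ k * (int (x k) - int (y k)) < 0"

lemma alt_less_iff_alt_less_at: "alt_less x y \<longleftrightarrow> (\<exists>k\<ge>1. alt_less_at x y k)"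
  unfolding alt_less_def alt_less_at_def by auto

lemma alt_less_at_1: "alt_less_at x y 1 \<longleftrightarrow> y 1 < x 1"
  by (simp add: alt_less_at_def)

lemma atLeastAtMost_1_Suc: "{1..Suc m} = insert 1 (Suc ` {1..m})"
  by (auto simp: image_iff)

lemma alt_less_at_Suc:
  assumes "k \<ge> 1"
  shows "alt_less_at x y (Suc k) \<longleftrightarrow> x 1 = y 1 \<and> alt_less_at (\<lambda>i. y (Suc i)) (\<lambda>i. x (Suc i)) k"
proof -
  have "{1..<Suc k} = insert 1 (Suc ` {1..<k})"
    using assms by (auto simp: image_iff)
  then show ?thesis
    unfolding alt_less_at_def by (auto simp only: ball_simps) (auto simp: algebra_simps)
qed

lemma alt_le_list_factor_iff:
  "alt_le_list (factor x 1 m) (factor y 1 m) \<longleftrightarrow>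
     (\<forall>i\<in>{1..m}. x i = y i) \<or> (\<exists>k\<in>{1..m}. alt_less_at x y k)"
proof (induction m arbitrary: x y)
  case (Suc m)
  let ?x = "\<lambda>i. x (Suc i)" and ?y = "\<lambda>i. y (Suc i)"
  have "alt_le_list (factor x 1 (Suc m)) (factor y 1 (Suc m)) \<longleftrightarrow>
      y 1 < x 1 \<or> x 1 = y 1 \<and> alt_le_list (factor ?y 1 m) (factor ?x 1 m)"
    by (simp add: factor_Suc factor_shift)
  also have "\<dots> \<longleftrightarrow> y 1 < x 1 \<or> x 1 = y 1 \<and>
      ((\<forall>i\<in>{1..m}. ?y i = ?x i) \<or> (\<exists>k\<in>{1..m}. alt_less_at ?y ?x k))"
    using Suc.IH by simp
  also have "\<dots> \<longleftrightarrow> (\<forall>i\<in>{1..Suc m}. x i = y i) \<or> (\<exists>k\<in>{1..Suc m}. alt_less_at x y k)"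
  proof -
    have "(\<exists>k\<in>{1..m}. alt_less_at x y (Suc k)) \<longleftrightarrow> x 1 = y 1 \<and> (\<exists>k\<in>{1..m}. alt_less_at ?y ?x k)"
      by (auto simp: alt_less_at_Suc)
    then show ?thesis
      unfolding atLeastAtMost_1_Suc ball_simps(7,9) bex_simps(5,7) alt_less_at_1 by auto
  qed
  finally show ?case .
qed simp

lemma alt_le_list_factor_if_alt_le:
  assumes "alt_le x y"
  shows "alt_le_list (factor x 1 m) (factor y 1 m)"
proof (cases "\<forall>i\<ge>1. x i = y i")
  case True
  then show ?thesis unfolding alt_le_list_factor_iff by auto
next
  case False
  with assms obtain k where "k \<ge> 1" "alt_less_at x y k"
    unfolding alt_le_def alt_less_iff_alt_less_at by blast
  then show ?thesis
    unfolding alt_le_list_factor_iff by (cases "k \<le> m") (auto simp: alt_less_at_def)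
qed

lemma alt_less_if_alt_le_list_factor:
  "alt_le_list (factor x 1 m) (factor y 1 m) \<Longrightarrow> factor x 1 m \<noteq> factor y 1 m \<Longrightarrow> alt_less x y"
  unfolding alt_le_list_factor_iff factor_eq_iff alt_less_iff_alt_less_at by auto

lemma alt_le_cong:
  assumes "alt_le x y" and "\<forall>i\<ge>1. y i = y' i"
  shows "alt_le x y'"
  using assms unfolding alt_le_def alt_less_def by metis

fun admissible :: "(nat \<Rightarrow> nat) \<Rightarrow> nat list \<Rightarrow> bool" where
  "admissible d [] \<longleftrightarrow> True"
| "admissible d (b # v) \<longleftrightarrow>
     admissible d v \<and> alt_le_list (factor d 1 (Suc (length v))) (b # v)"

lemma admissible_alt_le_list: "admissible d w \<Longrightarrow> alt_le_list (factor d 1 (length w)) w"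
  by (cases w) auto

lemma admissible_drop: "admissible d w \<Longrightarrow> admissible d (drop j w)"
  by (induction w arbitrary: j) (auto simp: drop_Cons split: nat.split)

lemma admissible_letter_le: "admissible d w \<Longrightarrow> b \<in> set w \<Longrightarrow> b \<le> d 1"
  by (induction w) (auto simp: factor_Suc)

lemma admissible_if_in_language:
  assumes "w \<in> language (alt_lyndon_system a d)"
  shows "admissible d w"
proof -
  obtain x k where x: "x \<in> alt_lyndon_system a d" and "k \<ge> 1" and "w = factor x k (length w)"
    using assms unfolding in_language_iff by blast
  then show ?thesis
  proof (induction w arbitrary: k)
    case (Cons b v)
    then have "alt_le d (suffix_from x k)"
      unfolding alt_lyndon_system_def by blast
    then have "alt_le_list (factor d 1 (Suc (length v))) (factor x k (Suc (length v)))"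
      using alt_le_list_factor_if_alt_le factor_suffix_from by metis
    with Cons show ?case
      by (auto simp: factor_Suc)
  qed simp
qed

definition prepend :: "nat list \<Rightarrow> (nat \<Rightarrow> nat) \<Rightarrow> nat \<Rightarrow> nat" where
  "prepend u y i = (if i \<le> length u then u ! (i - 1) else y (i - length u))"

lemma factor_prepend:
  assumes "j \<le> length u"
  shows "factor (prepend u y) (Suc j) (length u - j + m) = drop j u @ factor y 1 m"
  by (rule nth_equalityI)
    (use assms in \<open>auto simp: prepend_def nth_append intro!: arg_cong[where f = y]\<close>)

lemma factor_prepend_take:
  assumes "q \<le> j" and "j \<le> length w" and "drop j w = factor y 1 (length w - j)"
  shows "factor (prepend (take j w) y) (Suc q) (length w - q) = drop q w"
proof -
  have "drop q w = drop q (take j w) @ drop j w"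
    using assms(1,2) by (metis append_take_drop_id diff_is_0_eq drop_0 drop_append length_take min_absorb2)
  then show ?thesis
    using factor_prepend[of q "take j w" y "length w - j"] assms by simp
qed

lemma suffix_from_prepend:
  "length u < p \<Longrightarrow> i \<ge> 1 \<Longrightarrow> suffix_from (prepend u y) p i = suffix_from y (p - length u) i"
  by (auto simp: suffix_from_def prepend_def)

text \<open>
  The witness is w_1 \<dots> w_j d_1 d_2 \<dots> with j least such that w_(j+1) \<dots> w_n is a prefix of d;
  minimality makes the earlier suffixes strictly dominate d.
\<close>

lemma in_language_if_admissible:
  assumes alph: "\<forall>i\<ge>1. d i \<le> d 1" and lyn: "alt_lyndon d" and adm: "admissible d w"
  shows "w \<in> language (alt_lyndon_system (d 1) d)"
proof -
  define n where "n = length w"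
  define j0 where "j0 = (LEAST j. drop j w = factor d 1 (n - j))"
  have j0: "j0 \<le> n" "drop j0 w = factor d 1 (n - j0)"
    unfolding j0_def by (rule Least_le, simp add: n_def) (rule LeastI[of _ n], simp add: n_def)
  have least: "drop q w \<noteq> factor d 1 (n - q)" if "q < j0" for q
    using that unfolding j0_def by (rule not_less_Least)
  define u where "u = take j0 w"
  define x where "x = prepend u d"
  have "length u = j0"
    using j0 by (simp add: u_def n_def)
  have factor_x: "factor x (Suc q) (n - q) = drop q w" if "q \<le> j0" for q
    using factor_prepend_take[of q j0 w d] that j0 by (simp add: x_def u_def n_def)
  have "x \<in> alt_lyndon_system (d 1) d"
    unfolding alt_lyndon_system_def
  proof (intro CollectI conjI allI impI)
    fix i :: nat assume "i \<ge> 1"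
    then show "x i \<le> d 1"
      using alph admissible_letter_le[OF adm] \<open>length u = j0\<close>
      by (auto simp: x_def prepend_def u_def dest: in_set_takeD)
  next
    fix p :: nat assume "p \<ge> 1"
    show "alt_le d (suffix_from x p)"
    proof (cases "p \<le> j0")
      case False
      then have "alt_le d (suffix_from d (p - j0))"
        using lyn unfolding alt_lyndon_def by auto
      then show ?thesis
        using False \<open>length u = j0\<close> by (auto simp: x_def suffix_from_prepend intro: alt_le_cong)
    next
      case True
      define q where "q = p - 1"
      have "q < j0" and "p = Suc q"
        using True \<open>p \<ge> 1\<close> by (auto simp: q_def)
      have factor_p: "factor (suffix_from x p) 1 (n - q) = drop q w"
        unfolding factor_suffix_from \<open>p = Suc q\<close> using factor_x \<open>q < j0\<close> by simp
      have "alt_le_list (factor d 1 (n - q)) (drop q w)"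
        using admissible_alt_le_list[OF admissible_drop[OF adm], of q] by (simp add: n_def)
      then show ?thesis
        using least[OF \<open>q < j0\<close>] alt_less_if_alt_le_list_factor[of d "n - q" "suffix_from x p"]
        unfolding alt_le_def factor_p by metis
    qed
  qed
  moreover have "w = factor x 1 n"
    using factor_x[of 0] by simp
  ultimately show ?thesis
    unfolding in_language_iff n_def by (metis order.refl)
qed

definition adm_words :: "(nat \<Rightarrow> nat) \<Rightarrow> nat \<Rightarrow> nat list set" where
  "adm_words d m = {w. admissible d w \<and> length w = m}"

lemma language_eq_adm_words:
  assumes alph: "\<forall>i\<ge>1. d i \<le> d 1" and lyn: "alt_lyndon d"
  shows "{w \<in> language (alt_lyndon_system (d 1) d). length w = n} = adm_words d n"
  using admissible_if_in_language in_language_if_admissible[OF alph lyn]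
  unfolding adm_words_def by blast

lemma finite_adm_words: "finite (adm_words d m)"
proof (rule finite_subset)
  show "adm_words d m \<subseteq> {w. set w \<subseteq> {..d 1} \<and> length w = m}"
    using admissible_letter_le by (auto simp: adm_words_def)
qed (rule finite_lists_length_eq, simp)

lemma adm_words_0: "adm_words d 0 = {[]}"
  by (auto simp: adm_words_def)

lemma Cons_in_adm_words_iff:
  "b # v \<in> adm_words d (Suc m) \<longleftrightarrow> v \<in> adm_words d m \<and> alt_le_list (factor d 1 (Suc m)) (b # v)"
  by (auto simp: adm_words_def)

lemma Cons_in_adm_words_if_above:
  assumes "p \<in> adm_words d (Suc m)" "alt_le_list p (b # v)" "v \<in> adm_words d m"
  shows "b # v \<in> adm_words d (Suc m)"
proof -
  have "alt_le_list (factor d 1 (Suc m)) p"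
    using assms(1) admissible_alt_le_list unfolding adm_words_def by fastforce
  then show ?thesis
    using assms(2,3) alt_le_list_trans Cons_in_adm_words_iff by blast
qed

lemma factor_in_adm_words:
  assumes alph: "\<forall>i\<ge>1. d i \<le> d 1" and lyn: "alt_lyndon d" and "k \<ge> 1"
  shows "factor d k m \<in> adm_words d m"
proof -
  have "d \<in> alt_lyndon_system (d 1) d"
    using alph lyn unfolding alt_lyndon_system_def alt_lyndon_def by auto
  then have "factor d k m \<in> language (alt_lyndon_system (d 1) d)"
    unfolding in_language_iff using \<open>k \<ge> 1\<close> by auto
  then show ?thesis
    using admissible_if_in_language by (simp add: adm_words_def)
qed

definition below_count :: "(nat \<Rightarrow> nat) \<Rightarrow> nat \<Rightarrow> nat \<Rightarrow> nat" where
  "below_count d k m = card {v \<in> adm_words d m. alt_le_list v (factor d k m)}"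

lemma below_count_0: "below_count d k 0 = 1"
proof -
  have "{v \<in> adm_words d 0. alt_le_list v (factor d k 0)} = {[]}"
    by (auto simp: adm_words_0)
  then show ?thesis
    by (simp add: below_count_def)
qed

lemma below_count_1:
  assumes alph: "\<forall>i\<ge>1. d i \<le> d 1" and lyn: "alt_lyndon d"
  shows "below_count d 1 m = 1"
proof -
  have "{v \<in> adm_words d m. alt_le_list v (factor d 1 m)} = {factor d 1 m}"
    using factor_in_adm_words[OF alph lyn] admissible_alt_le_list alt_le_list_antisym alt_le_list_refl
    by (auto simp: adm_words_def)
  then show ?thesis
    by (simp add: below_count_def)
qed

lemma adm_words_above_factor:
  fixes k m :: nat
  assumes alph: "\<forall>i\<ge>1. d i \<le> d 1" and lyn: "alt_lyndon d" and "k \<ge> 1"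
  defines "e \<equiv> d k" and "u \<equiv> factor d (Suc k) m"
  shows "{w \<in> adm_words d (Suc m). \<not> alt_le_list w (e # u)} =
    (\<lambda>(b, v). b # v) ` ({..<e} \<times> adm_words d m \<union>
      {e} \<times> ({v \<in> adm_words d m. alt_le_list v u} - {u}))"
    (is "?above = (\<lambda>(b, v). b # v) ` ?pairs")
proof -
  have len: "v \<in> adm_words d m \<Longrightarrow> length v = length u" for v
    by (simp add: adm_words_def u_def)
  show ?thesis
  proof (intro equalityI subsetI)
    fix w assume "w \<in> ?above"
    then obtain b v where w: "w = b # v" and "v \<in> adm_words d m" "\<not> alt_le_list (b # v) (e # u)"
      by (cases w) (auto simp: Cons_in_adm_words_iff adm_words_def)
    then have "(b, v) \<in> ?pairs"
      using len alt_le_list_linear alt_le_list_refl by auto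
    then show "w \<in> (\<lambda>(b, v). b # v) ` ?pairs"
      using w by auto
  next
    fix w assume "w \<in> (\<lambda>(b, v). b # v) ` ?pairs"
    then obtain b v where w: "w = b # v" and v: "v \<in> adm_words d m"
      and "b < e \<or> b = e \<and> alt_le_list v u \<and> v \<noteq> u"
      by auto
    then have "alt_le_list (e # u) w" and "\<not> alt_le_list w (e # u)"
      using len alt_le_list_antisym by auto
    moreover have "e # u \<in> adm_words d (Suc m)"
      using factor_in_adm_words[OF alph lyn \<open>k \<ge> 1\<close>, of "Suc m"] by (simp add: e_def u_def factor_Suc)
    ultimately show "w \<in> ?above"
      using Cons_in_adm_words_if_above[OF _ _ v] w by auto
  qed
qed

lemma below_count_Suc:
  assumes alph: "\<forall>i\<ge>1. d i \<le> d 1" and lyn: "alt_lyndon d" and "k \<ge> 1"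
  shows "below_count d k (Suc m) + d k * card (adm_words d m) + below_count d (Suc k) m =
    card (adm_words d (Suc m)) + 1"
proof -
  define e where "e = d k"
  define u where "u = factor d (Suc k) m"
  define B where "B = {v \<in> adm_words d m. alt_le_list v u}"
  define above where "above = {w \<in> adm_words d (Suc m). \<not> alt_le_list w (e # u)}"
  have "finite B"
    using finite_adm_words by (simp add: B_def)
  have "u \<in> B"
    using factor_in_adm_words[OF alph lyn] by (simp add: B_def u_def alt_le_list_refl)
  have "card above = card ({..<e} \<times> adm_words d m \<union> {e} \<times> (B - {u}))"
    unfolding above_def B_def e_def u_def adm_words_above_factor[OF alph lyn \<open>k \<ge> 1\<close>]
    by (rule card_image) (auto intro: inj_onI)
  also have "\<dots> = e * card (adm_words d m) + (card B - 1)"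
    using finite_adm_words \<open>finite B\<close> \<open>u \<in> B\<close>
    by (subst card_Un_disjoint) (auto simp: card_cartesian_product)
  finally have "card above = e * card (adm_words d m) + (card B - 1)" .
  moreover have "below_count d k (Suc m) + card above = card (adm_words d (Suc m))"
  proof -
    have "{w \<in> adm_words d (Suc m). alt_le_list w (e # u)} \<union> above = adm_words d (Suc m)"
      by (auto simp: above_def)
    then show ?thesis
      using finite_adm_words unfolding below_count_def above_def e_def u_def factor_Suc
      by (metis (no_types, lifting) card_Un_disjoint disjoint_iff finite_Un mem_Collect_eq)
  qed
  moreover have "card B = below_count d (Suc k) m"
    by (simp add: B_def below_count_def u_def)
  moreover have "card B \<ge> 1"
    using \<open>u \<in> B\<close> \<open>finite B\<close> card_0_eq by fastforce
  ultimately show ?thesis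
    by (simp add: e_def)
qed

lemma below_count_diff:
  assumes alph: "\<forall>i\<ge>1. d i \<le> d 1" and lyn: "alt_lyndon d" and "k \<ge> 1"
  shows "int (below_count d (Suc k) m) - int (below_count d k m) =
    (\<Sum>i<m. (-1) ^ i * (int (d (k + i)) - int (d (Suc (k + i)))) * int (card (adm_words d (m - Suc i))))"
  using \<open>k \<ge> 1\<close>
proof (induction m arbitrary: k)
  case 0
  then show ?case by (simp add: below_count_0)
next
  case (Suc m)
  let ?H = "\<lambda>n. int (card (adm_words d n))"
  have rec: "int (below_count d j (Suc m)) + int (d j) * ?H m + int (below_count d (Suc j) m) =
      ?H (Suc m) + 1" if "j \<ge> 1" for j
    using arg_cong[where f = int, OF below_count_Suc[OF alph lyn that, of m]] by simp
  have "int (below_count d (Suc k) (Suc m)) - int (below_count d k (Suc m)) =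
      (int (d k) - int (d (Suc k))) * ?H m - (int (below_count d (Suc (Suc k)) m) - int (below_count d (Suc k) m))"
    unfolding left_diff_distrib using rec[of k] rec[of "Suc k"] \<open>k \<ge> 1\<close> by linarith
  also have "\<dots> = (int (d k) - int (d (Suc k))) * ?H m -
      (\<Sum>i<m. (-1) ^ i * (int (d (Suc k + i)) - int (d (Suc (Suc k + i)))) * ?H (m - Suc i))"
    using Suc.IH[of "Suc k"] by simp
  also have "\<dots> = (\<Sum>i<Suc m. (-1) ^ i * (int (d (k + i)) - int (d (Suc (k + i)))) * ?H (Suc m - Suc i))"
    unfolding sum.lessThan_Suc_shift by (simp add: sum_negf)
  finally show ?case .
qed

lemma card_adm_words_Suc:
  assumes alph: "\<forall>i\<ge>1. d i \<le> d 1" and lyn: "alt_lyndon d"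
  shows "int (card (adm_words d (Suc m))) = int (d 1) * int (card (adm_words d m)) +
    (\<Sum>i<m. (-1) ^ i * (int (d (Suc i)) - int (d (Suc (Suc i)))) * int (card (adm_words d (m - Suc i)))) + 1"
proof -
  have "card (adm_words d (Suc m)) = d 1 * card (adm_words d m) + below_count d 2 m"
    using below_count_Suc[OF alph lyn, of 1 m] below_count_1[OF alph lyn] by (simp add: numeral_2_eq_2)
  moreover have "int (below_count d 2 m) = 1 +
      (\<Sum>i<m. (-1) ^ i * (int (d (Suc i)) - int (d (Suc (Suc i)))) * int (card (adm_words d (m - Suc i))))"
    using below_count_diff[OF alph lyn, of 1 m] below_count_1[OF alph lyn] by (simp add: numeral_2_eq_2)
  ultimately show ?thesis
    by simp
qed

theorem proposition1:
  fixes d :: "nat \<Rightarrow> nat"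
  assumes alph: "\<forall>i\<ge>1. d i \<le> d 1"
    and lyn: "alt_lyndon d"
  defines "M \<equiv> alt_lyndon_system (d 1) d"
    and "d0 \<equiv> (\<lambda>k. if k = 0 then 0 else d k)"
  shows "H M 0 = 1 \<and>
    (\<forall>n\<ge>1. int (H M n) =
       (\<Sum>k=1..n. (-1) ^ k * (int (d0 (k - 1)) - int (d0 k)) * int (H M (n - k))) + 1)"
proof (intro conjI allI impI)
  have HM: "H M n = card (adm_words d n)" for n
    unfolding H_def M_def language_eq_adm_words[OF alph lyn] ..
  then show "H M 0 = 1"
    by (simp add: adm_words_0)
  fix n :: nat
  assume "n \<ge> 1"
  then obtain m where n: "n = Suc m"
    using Suc_le_D by auto
  define f where "f k = (-1) ^ k * (int (d0 (k - 1)) - int (d0 k)) * int (H M (n - k))" for k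
  have "(\<Sum>k=1..n. f k) = f 1 + (\<Sum>i<m. f (Suc (Suc i)))"
    unfolding n One_nat_def sum.atLeast1_atMost_eq sum.lessThan_Suc_shift ..
  then show "int (H M n) = (\<Sum>k=1..n. f k) + 1"
    using card_adm_words_Suc[OF alph lyn, of m] by (simp add: f_def d0_def HM n)
qed

end
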